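(* Let $\lambda_y>0$ be fixed and let $\mathcal{C}\subseteq(0,\infty)$ be a convex set. For $\lambda_x\in\mathcal{C}$ define $\alpha(\lambda_x,\lambda_y)=\frac{\lambda_x}{\lambda_y}\left(1-e^{-\lambda_y}\right)$ and $\bar{p}_{\lambda_y}(\lambda_x)=1-\frac{1}{1+\alpha(\lambda_x,\lambda_y)}$. Let $U(a,b)$ be a real-valued function that is jointly concave in $(a,b)$ and nondecreasing in $a$ for every fixed $b$. Then the objective function $\lambda_x\mapsto U\big(\bar{p}_{\lambda_y}(\lambda_x),\lambda_x\big)$ of the optimization problem $\max_{\lambda_x\in\mathcal{C}} U\big(\bar{p}_{\lambda_y}(\lambda_x),\lambda_x\big)$ is concave in $\lambda_x$ on $\mathcal{C}$.
   Context: Here $\lambda_x$ is the Poisson arrival rate of "fishing tasks" and $\lambda_y$ the Poisson arrival rate of regular tasks; the optimization problem above is called OP1 in the paper, and the lemma asserts that OP1 is a concave maximization problem in $\lambda_x$. *)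

theory Defs
  imports "HOL-Analysis.Analysis"
begin

definition alpha :: "real \<Rightarrow> real \<Rightarrow> real" where
  "alpha lx ly = (lx / ly) * (1 - exp (- ly))"

definition pbar :: "real \<Rightarrow> real \<Rightarrow> real" where
  "pbar ly lx = 1 - 1 / (1 + alpha lx ly)"

end

theory Submission
  imports Defs
begin

text \<open>With \<open>c = (1 - exp (- \<lambda>\<^sub>y)) / \<lambda>\<^sub>y > 0\<close> the objective's first argument is
  \<open>1 - 1 / (1 + c \<lambda>\<^sub>x)\<close>, which is concave because the reciprocal of a positive affine function
  is convex.  Substituting a concave function into the first argument of a jointly concave function
  that is nondecreasing in that argument preserves concavity.\<close>

lemma convex_on_inverse_affine:
  fixes a c :: real
  shows "convex_on {x. a + c * x > 0} (\<lambda>x. inverse (a + c * x))"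
  unfolding convex_on_def
proof (intro conjI ballI allI impI)
  have "{x. a + c * x > 0} = {x. inner c x > - a}"
    by (auto simp: algebra_simps)
  then show "convex {x. a + c * x > 0}"
    by (simp only: convex_halfspace_gt)
  fix x y u v :: real
  assume "x \<in> {x. a + c * x > 0}" "y \<in> {x. a + c * x > 0}"
    "u \<ge> 0" "v \<ge> 0" "u + v = 1"
  then have "inverse (u *\<^sub>R (a + c * x) + v *\<^sub>R (a + c * y))
      \<le> u * inverse (a + c * x) + v * inverse (a + c * y)"
    using convex_on_inverse[of "{0<..}"] unfolding convex_on_def by simp
  moreover have "a + c * (u *\<^sub>R x + v *\<^sub>R y) = u *\<^sub>R (a + c * x) + v *\<^sub>R (a + c * y)"
    using \<open>u + v = 1\<close> by (simp add: algebra_simps flip: eq_diff_eq)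
  ultimately show "inverse (a + c * (u *\<^sub>R x + v *\<^sub>R y))
      \<le> u * inverse (a + c * x) + v * inverse (a + c * y)"
    by simp
qed

lemma pbar_eq_inverse_affine:
  "pbar ly lx = 1 - inverse (1 + (1 - exp (- ly)) / ly * lx)"
  by (simp add: pbar_def alpha_def divide_inverse mult_ac)

lemma concave_on_pbar:
  assumes "ly > 0" and "convex C" and "C \<subseteq> {0..}"
  shows "concave_on C (pbar ly)"
proof -
  define c where "c = (1 - exp (- ly)) / ly"
  have "c > 0"
    using assms(1) by (simp add: c_def)
  then have "C \<subseteq> {lx. 1 + c * lx > 0}"
    using assms(3) by (force intro: add_pos_nonneg)
  then have "convex_on C (\<lambda>lx. inverse (1 + c * lx))"
    using convex_on_subset[OF convex_on_inverse_affine] assms(2) by blast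
  then show ?thesis
    unfolding pbar_eq_inverse_affine[abs_def] c_def[symmetric]
    by (intro concave_on_diff) (simp_all add: concave_on_const assms(2))
qed

lemma concave_on_compose_mono_first:
  fixes g :: "'a::real_vector \<Rightarrow> real" and U :: "real \<Rightarrow> 'a \<Rightarrow> real"
  assumes g: "concave_on S g"
    and U: "concave_on UNIV (\<lambda>(a, b). U a b)"
    and mono_U: "\<And>b. mono (\<lambda>a. U a b)"
  shows "concave_on S (\<lambda>x. U (g x) x)"
  unfolding concave_on_iff
proof (intro conjI ballI allI impI)
  show "convex S"
    using g by (rule concave_on_imp_convex)
  fix x y :: 'a and u v :: real
  assume "x \<in> S" "y \<in> S" "u \<ge> 0" "v \<ge> 0" "u + v = 1"
  then have "g (u *\<^sub>R x + v *\<^sub>R y) \<ge> u * g x + v * g y"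
    using g by (simp add: concave_on_iff)
  then have "U (g (u *\<^sub>R x + v *\<^sub>R y)) (u *\<^sub>R x + v *\<^sub>R y)
      \<ge> U (u * g x + v * g y) (u *\<^sub>R x + v *\<^sub>R y)"
    using mono_U by (simp add: mono_def)
  moreover have "U (u * g x + v * g y) (u *\<^sub>R x + v *\<^sub>R y) \<ge> u * U (g x) x + v * U (g y) y"
    using U \<open>u \<ge> 0\<close> \<open>v \<ge> 0\<close> \<open>u + v = 1\<close> unfolding concave_on_iff
    by (auto dest!: bspec[of _ _ "(g x, x)"] bspec[of _ _ "(g y, y)"])
  ultimately show "U (g (u *\<^sub>R x + v *\<^sub>R y)) (u *\<^sub>R x + v *\<^sub>R y) \<ge> u * U (g x) x + v * U (g y) y"
    by linarith
qed

theorem lemma1: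
  fixes ly :: real and C :: "real set" and U :: "real \<Rightarrow> real \<Rightarrow> real"
  assumes "ly > 0"
    and "convex C" and "C \<subseteq> {0<..}"
    and "concave_on UNIV (\<lambda>(a, b). U a b)"
    and "\<And>b. mono (\<lambda>a. U a b)"
  shows "concave_on C (\<lambda>lx. U (pbar ly lx) lx)"
proof -
  have "concave_on C (pbar ly)"
    using assms(1-3) by (intro concave_on_pbar) auto
  then show ?thesis
    using assms(4,5) by (rule concave_on_compose_mono_first)
qed

end
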